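(* There exists an absolute constant $c>0$ such that for every $n$ and every convex body $K$ of volume $1$ in $\mathbb{R}^n$, $$\int_K\varphi_{\mu_K}(x)\,dx\geq e^{-cn},$$ where $\mu_K$ is the uniform (Lebesgue) probability measure on $K$.
   Context: A convex body is a compact convex set with non-empty interior. $\varphi_\mu(x)=\inf\{\mu(H): H$ a half-space of $\mathbb{R}^n$ containing $x\}$ (Tukey's half-space depth). *)

theory Defs
  imports "HOL-Analysis.Analysis"
begin

text \<open>Euclidean space R^n, for a dimension n that is quantified inside the statement,
  is represented by the extensional functions on the index set {..<n}
  (points x :: nat => real with x i = undefined for i >= n).\<close>

definition Rn :: "nat \<Rightarrow> (nat \<Rightarrow> real) set" where
  "Rn n = PiE {..<n} (\<lambda>_. UNIV)"

definition lebn :: "nat \<Rightarrow> (nat \<Rightarrow> real) measure" where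
  "lebn n = PiM {..<n} (\<lambda>_. lborel)"

definition convex_n :: "nat \<Rightarrow> (nat \<Rightarrow> real) set \<Rightarrow> bool" where
  "convex_n n K \<longleftrightarrow> K \<subseteq> Rn n \<and>
     (\<forall>x\<in>K. \<forall>y\<in>K. \<forall>t::real. 0 \<le> t \<and> t \<le> 1 \<longrightarrow>
        restrict (\<lambda>i. t * x i + (1 - t) * y i) {..<n} \<in> K)"

text \<open>Convex body: compact convex set with non-empty interior (interior taken in R^n,
  i.e. relative to the subspace topology of Rn n inside the product topology).\<close>
definition convex_body :: "nat \<Rightarrow> (nat \<Rightarrow> real) set \<Rightarrow> bool" where
  "convex_body n K \<longleftrightarrow> convex_n n K \<and> compact K \<and>
     (\<exists>U. openin (top_of_set (Rn n)) U \<and> U \<noteq> {} \<and> U \<subseteq> K)"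

definition halfspace_n :: "nat \<Rightarrow> (nat \<Rightarrow> real) set \<Rightarrow> bool" where
  "halfspace_n n H \<longleftrightarrow> (\<exists>a b. (\<exists>i<n. a i \<noteq> 0) \<and>
      H = {x \<in> Rn n. (\<Sum>i<n. a i * x i) \<le> b})"

definition tukey_depth :: "nat \<Rightarrow> (nat \<Rightarrow> real) measure \<Rightarrow> (nat \<Rightarrow> real) \<Rightarrow> real" where
  "tukey_depth n \<mu> x = Inf {measure \<mu> H | H. halfspace_n n H \<and> x \<in> H}"

end

theory Submission
  imports Defs
begin

text \<open>For x in K, the set K \<inter> (2x - K) is symmetric about x, and the point reflection through x
  maps its part outside a closed half-space H containing x into H.  Hence H carries at least half
  of it, and the depth of x is at least |K \<inter> (2x - K)| / (2 |K|).  For convex K this set is empty when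
  x is outside K, and by Fubini and the substitution x \<mapsto> 2x - y,
  \<integral> |K \<inter> (2x - K)| dx = |K|^2 / 2^n.  So the integral of the depth is at least
  2^(-n-1) \<ge> e^(-2n).\<close>

lemma space_lebn: "space (lebn n) = Rn n"
  by (simp add: lebn_def Rn_def space_PiM)

lemma sigma_finite_lebn: "sigma_finite_measure (lebn n)"
proof -
  interpret product_sigma_finite "\<lambda>_::nat. lborel :: real measure" by standard
  interpret finite_product_sigma_finite "\<lambda>_::nat. lborel :: real measure" "{..<n}" by standard simp
  show ?thesis unfolding lebn_def by (rule sigma_finite_measure_axioms)
qed

lemma measurable_lebn_affine:
  "(\<lambda>x. restrict (\<lambda>i. t i + c * x i) {..<n}) \<in> lebn n \<rightarrow>\<^sub>M lebn n"
  unfolding lebn_def by (intro measurable_restrict) measurable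

lemma lebn_affine:
  fixes t :: "nat \<Rightarrow> real"
  assumes c: "c \<noteq> 0"
  shows "lebn n = density (distr (lebn n) (lebn n) (\<lambda>x. restrict (\<lambda>i. t i + c * x i) {..<n}))
                    (\<lambda>_. ennreal (\<bar>c\<bar> ^ n))"
    (is "_ = density (distr _ _ ?T) _")
proof -
  interpret product_sigma_finite "\<lambda>_::nat. lborel :: real measure" by standard
  have lborel_vimage: "emeasure lborel A = ennreal \<bar>c\<bar> * emeasure lborel ((\<lambda>u. s + c * u) -` A)"
    if "A \<in> sets borel" for A and s :: real
    using that by (subst lborel_real_affine[OF c, of s])
      (simp add: emeasure_density nn_integral_cmult_indicator emeasure_distr)
  show ?thesis unfolding lebn_def
  proof (rule PiM_eqI[symmetric])
    fix A :: "nat \<Rightarrow> real set" assume A: "\<And>i. i \<in> {..<n} \<Longrightarrow> A i \<in> sets lborel"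
    have affine_vimage: "(\<lambda>u. t i + c * u) -` A i \<in> sets borel" if "i < n" for i
      using measurable_sets[of "\<lambda>u. t i + c * u" borel borel "A i"] A that by simp
    have PA: "Pi\<^sub>E {..<n} A \<in> sets (Pi\<^sub>M {..<n} (\<lambda>_. lborel))"
      using A by (intro sets_PiM_I_finite) auto
    have vimage: "?T -` Pi\<^sub>E {..<n} A \<inter> space (Pi\<^sub>M {..<n} (\<lambda>_. lborel))
        = Pi\<^sub>E {..<n} (\<lambda>i. (\<lambda>u. t i + c * u) -` A i)"
      by (auto simp: space_PiM PiE_iff)
    have "emeasure (density (distr (Pi\<^sub>M {..<n} (\<lambda>_. lborel)) (Pi\<^sub>M {..<n} (\<lambda>_. lborel)) ?T)
          (\<lambda>_. ennreal (\<bar>c\<bar> ^ n))) (Pi\<^sub>E {..<n} A)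
        = ennreal (\<bar>c\<bar> ^ n) * emeasure (Pi\<^sub>M {..<n} (\<lambda>_. lborel)) (Pi\<^sub>E {..<n} (\<lambda>i. (\<lambda>u. t i + c * u) -` A i))"
      using PA measurable_lebn_affine[of t c n] vimage unfolding lebn_def
      by (simp add: emeasure_density nn_integral_cmult_indicator emeasure_distr)
    also have "\<dots> = (\<Prod>i<n. ennreal \<bar>c\<bar> * emeasure lborel ((\<lambda>u. t i + c * u) -` A i))"
      using affine_vimage by (subst emeasure_PiM) (auto simp: prod.distrib ennreal_power)
    also have "\<dots> = (\<Prod>i<n. emeasure lborel (A i))"
      using A by (intro prod.cong refl lborel_vimage[symmetric]) auto
    finally show "emeasure (density (distr (Pi\<^sub>M {..<n} (\<lambda>_. lborel)) (Pi\<^sub>M {..<n} (\<lambda>_. lborel)) ?T)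
        (\<lambda>_. ennreal (\<bar>c\<bar> ^ n))) (Pi\<^sub>E {..<n} A) = (\<Prod>i\<in>{..<n}. emeasure lborel (A i))"
      by simp
  qed simp_all
qed

lemma nn_integral_lebn_affine:
  fixes t :: "nat \<Rightarrow> real"
  assumes f: "f \<in> borel_measurable (lebn n)" and c: "c \<noteq> 0"
  shows "(\<integral>\<^sup>+x. f x \<partial>lebn n)
    = ennreal (\<bar>c\<bar> ^ n) * (\<integral>\<^sup>+x. f (restrict (\<lambda>i. t i + c * x i) {..<n}) \<partial>lebn n)"
  using f measurable_lebn_affine[of t c n]
  by (subst lebn_affine[OF c, where t=t and n=n])
    (simp add: nn_integral_density nn_integral_distr nn_integral_cmult measurable_compose)

definition reflect_n :: "nat \<Rightarrow> (nat \<Rightarrow> real) \<Rightarrow> (nat \<Rightarrow> real) \<Rightarrow> (nat \<Rightarrow> real)" where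
  "reflect_n n x y = restrict (\<lambda>i. 2 * x i - y i) {..<n}"

lemma reflect_n_in_Rn: "reflect_n n x y \<in> Rn n"
  by (simp add: reflect_n_def Rn_def)

lemma reflect_n_reflect_n: "y \<in> Rn n \<Longrightarrow> reflect_n n x (reflect_n n x y) = y"
  by (auto simp: reflect_n_def Rn_def PiE_iff extensional_def fun_eq_iff)

lemma measurable_reflect_n_fixed_center: "reflect_n n x \<in> lebn n \<rightarrow>\<^sub>M lebn n"
  unfolding reflect_n_def lebn_def by (intro measurable_restrict) measurable

lemma measurable_reflect_n_fixed_point: "(\<lambda>x. reflect_n n x y) \<in> lebn n \<rightarrow>\<^sub>M lebn n"
  unfolding reflect_n_def lebn_def by (intro measurable_restrict) measurable

lemma measurable_reflect_n[measurable]: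
  assumes "f \<in> M \<rightarrow>\<^sub>M lebn n" "g \<in> M \<rightarrow>\<^sub>M lebn n"
  shows "(\<lambda>p. reflect_n n (f p) (g p)) \<in> M \<rightarrow>\<^sub>M lebn n"
proof -
  have component: "(\<lambda>p. h p i) \<in> borel_measurable M" if "h \<in> M \<rightarrow>\<^sub>M lebn n" "i < n" for h i
    using measurable_compose[OF that(1)[unfolded lebn_def] measurable_component_singleton[of i]] that(2)
    by simp
  show ?thesis
    unfolding reflect_n_def lebn_def using component[OF assms(1)] component[OF assms(2)]
    by (intro measurable_restrict borel_measurable_diff borel_measurable_times borel_measurable_const) auto
qed

lemma emeasure_reflect_n_vimage:
  assumes A: "A \<in> sets (lebn n)"
  shows "emeasure (lebn n) (reflect_n n x -` A \<inter> space (lebn n)) = emeasure (lebn n) A"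
proof -
  have "reflect_n n x -` A \<inter> space (lebn n) \<in> sets (lebn n)"
    using measurable_reflect_n_fixed_center A by (rule measurable_sets)
  then have "emeasure (lebn n) (reflect_n n x -` A \<inter> space (lebn n))
      = (\<integral>\<^sup>+y. indicator A (reflect_n n x y) \<partial>lebn n)"
    by (auto simp: space_lebn reflect_n_in_Rn intro!: nn_integral_cong simp flip: nn_integral_indicator
        split: split_indicator)
  also have "\<dots> = emeasure (lebn n) A"
    using A nn_integral_lebn_affine[of "indicator A" n "- 1" "\<lambda>i. 2 * x i"]
    by (simp add: reflect_n_def)
  finally show ?thesis .
qed

lemma sets_lebn_halfspace: "halfspace_n n H \<Longrightarrow> H \<in> sets (lebn n)"
  unfolding halfspace_n_def
proof (elim exE conjE)
  fix a b assume H: "H = {x \<in> Rn n. (\<Sum>i<n. a i * x i) \<le> b}"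
  have "{x \<in> space (lebn n). (\<Sum>i<n. a i * x i) \<le> b} \<in> sets (lebn n)"
    unfolding lebn_def by measurable
  then show "H \<in> sets (lebn n)" by (simp add: H space_lebn)
qed

lemma reflect_n_in_halfspace:
  assumes "halfspace_n n H" "x \<in> H" "y \<in> Rn n" "y \<notin> H"
  shows "reflect_n n x y \<in> H"
proof -
  obtain a b where H: "H = {z \<in> Rn n. (\<Sum>i<n. a i * z i) \<le> b}"
    using assms(1) unfolding halfspace_n_def by blast
  have "(\<Sum>i<n. a i * reflect_n n x y i) = 2 * (\<Sum>i<n. a i * x i) - (\<Sum>i<n. a i * y i)"
    by (simp add: reflect_n_def algebra_simps sum_distrib_left sum_subtractf)
  with assms(2-4) show ?thesis by (auto simp: H reflect_n_in_Rn)
qed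

lemma emeasure_symmetric_le_twice_halfspace:
  assumes S: "S \<in> sets (lebn n)" and sym: "\<And>y. y \<in> S \<Longrightarrow> reflect_n n x y \<in> S"
    and H: "halfspace_n n H" "x \<in> H"
  shows "emeasure (lebn n) S \<le> 2 * emeasure (lebn n) (H \<inter> S)"
proof -
  have HS: "H \<inter> S \<in> sets (lebn n)"
    using S sets_lebn_halfspace[OF H(1)] by blast
  have "S \<subseteq> (H \<inter> S) \<union> (reflect_n n x -` (H \<inter> S) \<inter> space (lebn n))"
    using sets.sets_into_space[OF S] sym reflect_n_in_halfspace[OF H] reflect_n_reflect_n
    by (fastforce simp: space_lebn)
  then have "emeasure (lebn n) S
      \<le> emeasure (lebn n) ((H \<inter> S) \<union> (reflect_n n x -` (H \<inter> S) \<inter> space (lebn n)))"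
    using HS measurable_sets[OF measurable_reflect_n_fixed_center HS] by (intro emeasure_mono) auto
  also have "\<dots> \<le> emeasure (lebn n) (H \<inter> S) + emeasure (lebn n) (reflect_n n x -` (H \<inter> S) \<inter> space (lebn n))"
    using HS measurable_sets[OF measurable_reflect_n_fixed_center HS] by (rule emeasure_subadditive)
  also have "\<dots> = 2 * emeasure (lebn n) (H \<inter> S)"
    using emeasure_reflect_n_vimage[OF HS, of x] by (simp only: mult_2)
  finally show ?thesis .
qed

lemma sets_lebn_reflection_overlap:
  assumes K: "K \<in> sets (lebn n)"
  shows "{y \<in> K. reflect_n n x y \<in> K} \<in> sets (lebn n)"
proof -
  have "{y \<in> K. reflect_n n x y \<in> K} = K \<inter> (reflect_n n x -` K \<inter> space (lebn n))"
    using sets.sets_into_space[OF K] by blast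
  then show ?thesis
    using K measurable_sets[OF measurable_reflect_n_fixed_center K] by auto
qed

lemma halfspace_n_through_point:
  assumes "1 \<le> n" "x \<in> Rn n"
  shows "\<exists>H. halfspace_n n H \<and> x \<in> H"
proof -
  define a where "a = (\<lambda>i::nat. if i = 0 then 1 else (0::real))"
  have "halfspace_n n {z \<in> Rn n. (\<Sum>i<n. a i * z i) \<le> (\<Sum>i<n. a i * x i)}"
    unfolding halfspace_n_def using assms(1) by (intro exI[of _ a] exI conjI) (auto simp: a_def)
  with assms(2) show ?thesis by blast
qed

lemma measure_reflection_overlap_le_tukey_depth:
  assumes n: "1 \<le> n" and x: "x \<in> Rn n"
    and K: "K \<in> sets (lebn n)" "emeasure (lebn n) K \<noteq> 0" "emeasure (lebn n) K \<noteq> \<infinity>"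
  shows "measure (lebn n) {y \<in> K. reflect_n n x y \<in> K}
    \<le> 2 * measure (lebn n) K * tukey_depth n (uniform_measure (lebn n) K) x"
proof -
  define S where "S = {y \<in> K. reflect_n n x y \<in> K}"
  have K_fin: "K \<in> fmeasurable (lebn n)"
    using K by (simp add: fmeasurableI less_top)
  have S_fin: "S \<in> fmeasurable (lebn n)"
    unfolding S_def by (rule fmeasurableI2[OF K_fin _ sets_lebn_reflection_overlap[OF K(1)]]) auto
  have K_pos: "0 < measure (lebn n) K"
    using K emeasure_eq_measure2[OF K_fin] by (simp add: zero_less_measure_iff)
  have "measure (lebn n) S / (2 * measure (lebn n) K) \<le> measure (uniform_measure (lebn n) K) H"
    if H: "halfspace_n n H" "x \<in> H" for H
  proof -
    have H_sets: "H \<in> sets (lebn n)"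
      using H(1) by (rule sets_lebn_halfspace)
    have HS_fin: "H \<inter> S \<in> fmeasurable (lebn n)"
      using fmeasurable_Int_fmeasurable[OF S_fin H_sets] by (simp add: Int_commute)
    have "emeasure (lebn n) S \<le> 2 * emeasure (lebn n) (H \<inter> S)"
      using S_fin H reflect_n_reflect_n sets.sets_into_space[OF K(1)]
      by (intro emeasure_symmetric_le_twice_halfspace) (auto simp: S_def space_lebn)
    then have "ennreal (measure (lebn n) S) \<le> ennreal (2 * measure (lebn n) (H \<inter> S))"
      using S_fin HS_fin by (simp add: emeasure_eq_measure2 ennreal_mult)
    then have "measure (lebn n) S \<le> 2 * measure (lebn n) (H \<inter> S)"
      by simp
    also have "\<dots> \<le> 2 * measure (lebn n) (K \<inter> H)"
      using HS_fin fmeasurable_Int_fmeasurable[OF K_fin H_sets]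
      by (intro mult_left_mono measure_mono_fmeasurable) (auto simp: S_def)
    also have "\<dots> = 2 * measure (lebn n) K * measure (uniform_measure (lebn n) K) H"
      using K H_sets K_pos by simp
    finally show ?thesis
      using K_pos by (simp add: divide_le_eq mult.commute)
  qed
  then have "measure (lebn n) S / (2 * measure (lebn n) K) \<le> tukey_depth n (uniform_measure (lebn n) K) x"
    unfolding tukey_depth_def
    using halfspace_n_through_point[OF n x] by (intro cInf_greatest) auto
  then show ?thesis
    using K_pos by (simp add: S_def divide_le_eq mult.commute)
qed

lemma convex_nD:
  "convex_n n K \<Longrightarrow> x \<in> K \<Longrightarrow> y \<in> K \<Longrightarrow> 0 \<le> t \<Longrightarrow> t \<le> 1
    \<Longrightarrow> restrict (\<lambda>i. t * x i + (1 - t) * y i) {..<n} \<in> K"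
  unfolding convex_n_def by blast

lemma reflection_overlap_eq_empty:
  assumes K: "convex_n n K" and x: "x \<in> Rn n" "x \<notin> K"
  shows "{y \<in> K. reflect_n n x y \<in> K} = {}"
proof (rule ccontr)
  assume "{y \<in> K. reflect_n n x y \<in> K} \<noteq> {}"
  then obtain y where y: "y \<in> K" "reflect_n n x y \<in> K" by blast
  have "restrict (\<lambda>i. (1/2) * y i + (1 - 1/2) * reflect_n n x y i) {..<n} = x"
    using x(1) by (auto simp: reflect_n_def Rn_def PiE_iff extensional_def fun_eq_iff field_simps)
  then show False
    using convex_nD[OF K y, of "1/2"] x(2) by simp
qed

lemma borel_measurable_emeasure_reflection_overlap:
  assumes K: "K \<in> sets (lebn n)"
  shows "(\<lambda>x. emeasure (lebn n) {y \<in> K. reflect_n n x y \<in> K}) \<in> borel_measurable (lebn n)"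
proof -
  have "{p \<in> space (lebn n \<Otimes>\<^sub>M lebn n). snd p \<in> K \<and> reflect_n n (fst p) (snd p) \<in> K}
      \<in> sets (lebn n \<Otimes>\<^sub>M lebn n)"
    using K by measurable
  from sigma_finite_measure.measurable_emeasure_Pair[OF sigma_finite_lebn this]
  have "(\<lambda>x. emeasure (lebn n) {y \<in> space (lebn n). y \<in> K \<and> reflect_n n x y \<in> K})
      \<in> borel_measurable (lebn n)"
    by (auto simp: space_pair_measure cong: measurable_cong)
  moreover have "{y \<in> space (lebn n). y \<in> K \<and> reflect_n n x y \<in> K} = {y \<in> K. reflect_n n x y \<in> K}" for x
    using sets.sets_into_space[OF K] by auto
  ultimately show ?thesis by simp
qed

lemma nn_integral_emeasure_reflection_overlap:
  assumes K: "K \<in> sets (lebn n)"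
  shows "ennreal (2 ^ n) * (\<integral>\<^sup>+x. emeasure (lebn n) {y \<in> K. reflect_n n x y \<in> K} \<partial>lebn n)
    = emeasure (lebn n) K ^ 2"
proof -
  interpret pair_sigma_finite "lebn n" "lebn n"
    using sigma_finite_lebn by (simp add: pair_sigma_finite_def)
  let ?F = "\<lambda>y x. indicator K y * indicator K (reflect_n n x y) :: ennreal"
  have F_measurable: "case_prod ?F \<in> borel_measurable (lebn n \<Otimes>\<^sub>M lebn n)"
    using K by measurable
  have overlap: "emeasure (lebn n) {y \<in> K. reflect_n n x y \<in> K} = (\<integral>\<^sup>+y. ?F y x \<partial>lebn n)" for x
    using sets_lebn_reflection_overlap[OF K, of x]
    by (auto simp flip: nn_integral_indicator intro!: nn_integral_cong split: split_indicator)
  have reflected: "ennreal (2 ^ n) * (\<integral>\<^sup>+x. indicator K (reflect_n n x y) \<partial>lebn n) = emeasure (lebn n) K"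
    for y
    using K nn_integral_lebn_affine[of "indicator K" n 2 "\<lambda>i. - y i"]
    by (simp add: reflect_n_def)
  have "ennreal (2 ^ n) * (\<integral>\<^sup>+x. (\<integral>\<^sup>+y. ?F y x \<partial>lebn n) \<partial>lebn n)
      = (\<integral>\<^sup>+y. ennreal (2 ^ n) * (\<integral>\<^sup>+x. ?F y x \<partial>lebn n) \<partial>lebn n)"
    using sigma_finite_measure.borel_measurable_nn_integral[OF sigma_finite_lebn F_measurable]
    by (simp add: Fubini'[OF F_measurable] nn_integral_cmult)
  also have "\<dots> = (\<integral>\<^sup>+y. indicator K y * emeasure (lebn n) K \<partial>lebn n)"
  proof (intro nn_integral_cong)
    fix y
    have "(\<integral>\<^sup>+x. ?F y x \<partial>lebn n) = indicator K y * (\<integral>\<^sup>+x. indicator K (reflect_n n x y) \<partial>lebn n)"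
      by (rule nn_integral_cmult)
        (rule measurable_compose[OF measurable_reflect_n_fixed_point borel_measurable_indicator[OF K]])
    then show "ennreal (2 ^ n) * (\<integral>\<^sup>+x. ?F y x \<partial>lebn n) = indicator K y * emeasure (lebn n) K"
      by (simp add: reflected mult.left_commute)
  qed
  also have "\<dots> = emeasure (lebn n) K ^ 2"
    using K by (simp add: nn_integral_multc power2_eq_square)
  finally show ?thesis by (simp add: overlap)
qed

lemma exp_neg_two_mult_le_inverse_two_power:
  assumes "1 \<le> n"
  shows "exp (- 2 * real n) \<le> 1 / 2 ^ Suc n"
proof -
  have "(2::real) ^ Suc n \<le> 2 ^ (2 * n)"
    using assms by (intro power_increasing) auto
  also have "\<dots> \<le> exp 1 ^ (2 * n)"
    using exp_ge_add_one_self[of 1] by (intro power_mono) auto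
  also have "\<dots> = exp (2 * real n)"
    by (simp flip: exp_of_nat_mult)
  finally show ?thesis
    by (simp add: exp_minus field_simps)
qed

lemma emeasure_reflection_overlap_le_tukey_depth:
  assumes n: "1 \<le> n" and convex: "convex_n n K" and K1: "emeasure (lebn n) K = 1"
    and x: "x \<in> Rn n"
  shows "emeasure (lebn n) {y \<in> K. reflect_n n x y \<in> K} / 2
    \<le> ennreal (tukey_depth n (uniform_measure (lebn n) K) x) * indicator K x"
proof (cases "x \<in> K")
  case True
  have K: "K \<in> sets (lebn n)"
    using K1 emeasure_notin_sets by fastforce
  have "emeasure (lebn n) {y \<in> K. reflect_n n x y \<in> K} \<le> 1"
    using emeasure_mono[OF _ K, of "{y \<in> K. reflect_n n x y \<in> K}"] K1 by auto
  then have "emeasure (lebn n) {y \<in> K. reflect_n n x y \<in> K}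
      = ennreal (measure (lebn n) {y \<in> K. reflect_n n x y \<in> K})"
    by (intro emeasure_eq_ennreal_measure) (auto simp: top_unique)
  also have "\<dots> \<le> ennreal (2 * tukey_depth n (uniform_measure (lebn n) K) x)"
    using measure_reflection_overlap_le_tukey_depth[OF n x K] K1
    by (intro ennreal_leI) (simp add: measure_def)
  also have "\<dots> = 2 * ennreal (tukey_depth n (uniform_measure (lebn n) K) x)"
    by (simp add: ennreal_mult')
  finally show ?thesis
    using True by (simp add: divide_le_posI_ennreal)
next
  case False
  then show ?thesis
    using x by (subst reflection_overlap_eq_empty[OF convex]) auto
qed

lemma nn_integral_tukey_depth_ge:
  assumes n: "1 \<le> n" and convex: "convex_n n K" and K1: "emeasure (lebn n) K = 1"
  shows "ennreal (1 / 2 ^ Suc n)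
    \<le> (\<integral>\<^sup>+x \<in> K. ennreal (tukey_depth n (uniform_measure (lebn n) K) x) \<partial>lebn n)"
proof -
  define overlap where "overlap x = emeasure (lebn n) {y \<in> K. reflect_n n x y \<in> K}" for x
  have K: "K \<in> sets (lebn n)"
    using K1 emeasure_notin_sets by fastforce
  have "ennreal (1 / 2 ^ n) * ennreal (2 ^ n) = 1"
    by (simp flip: ennreal_mult)
  then have "(\<integral>\<^sup>+x. overlap x \<partial>lebn n)
      = ennreal (1 / 2 ^ n) * (ennreal (2 ^ n) * (\<integral>\<^sup>+x. overlap x \<partial>lebn n))"
    by (simp only: mult.assoc[symmetric] mult_1)
  also have "\<dots> = ennreal (1 / 2 ^ n)"
    using nn_integral_emeasure_reflection_overlap[OF K] K1 by (simp add: overlap_def)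
  finally have "ennreal (1 / 2 ^ Suc n) = (\<integral>\<^sup>+x. overlap x \<partial>lebn n) / 2"
    using divide_ennreal[of "1 / 2 ^ n" 2] by simp
  also have "\<dots> = (\<integral>\<^sup>+x. overlap x / 2 \<partial>lebn n)"
    using borel_measurable_emeasure_reflection_overlap[OF K]
    by (simp add: overlap_def nn_integral_divide)
  also have "\<dots> \<le> (\<integral>\<^sup>+x \<in> K. ennreal (tukey_depth n (uniform_measure (lebn n) K) x) \<partial>lebn n)"
    using emeasure_reflection_overlap_le_tukey_depth[OF n convex K1]
    by (intro nn_integral_mono) (simp add: overlap_def space_lebn)
  finally show ?thesis .
qed

theorem proposition4p1:
  shows "\<exists>c>0. \<forall>n::nat. \<forall>K. n \<ge> 1 \<and> convex_body n K \<and> emeasure (lebn n) K = 1 \<longrightarrow>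
     (\<integral>\<^sup>+ x \<in> K. ennreal (tukey_depth n (uniform_measure (lebn n) K) x) \<partial>lebn n)
        \<ge> ennreal (exp (- c * real n))"
proof (intro exI[of _ 2] conjI allI impI)
  fix n :: nat and K
  assume "n \<ge> 1 \<and> convex_body n K \<and> emeasure (lebn n) K = 1"
  then have n: "1 \<le> n" and convex: "convex_n n K" and K1: "emeasure (lebn n) K = 1"
    by (auto simp: convex_body_def)
  have "ennreal (exp (- 2 * real n)) \<le> ennreal (1 / 2 ^ Suc n)"
    using exp_neg_two_mult_le_inverse_two_power[OF n] by (rule ennreal_leI)
  also have "\<dots> \<le> (\<integral>\<^sup>+ x \<in> K. ennreal (tukey_depth n (uniform_measure (lebn n) K) x) \<partial>lebn n)"
    using nn_integral_tukey_depth_ge[OF n convex K1] .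
  finally show "ennreal (exp (- 2 * real n))
      \<le> (\<integral>\<^sup>+ x \<in> K. ennreal (tukey_depth n (uniform_measure (lebn n) K) x) \<partial>lebn n)" .
qed simp

end
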